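(* Let $x=[a_0,a_1,a_2,\ldots]$ and $y=[b_0,b_1,b_2,\ldots]$ be irrational real numbers with convergents $s_k/t_k$ and $s_k'/t_k'$ respectively, and let $k\ge 0$ be such that $a_i\equiv b_i \pmod 4$ for all $0\le i\le k$. Then $\left(\frac{s_k}{t_k}\right)=\left(\frac{s_k'}{t_k'}\right)$, i.e. the Jacobi symbol $\left(\frac{s_k}{t_k}\right)$ depends only on the residue classes of $a_0,a_1,\ldots,a_k$ in $\mathbb{Z}/4\mathbb{Z}$. If moreover $a_0\ge 0$ and $b_0\ge 0$, then also $\left(\frac{t_k}{s_k}\right)=\left(\frac{t_k'}{s_k'}\right)$.
   Context: For $x\in\mathbb{R}\setminus\mathbb{Q}$ with regular continued fraction expansion $x=[a_0,a_1,a_2,\ldots]$ ($a_0\in\mathbb{Z}$, $a_i\ge 1$ for $i\ge1$), the convergents $s_k/t_k$ are defined by $s_{-1}=1$, $s_0=a_0$, $s_k=a_ks_{k-1}+s_{k-2}$ and $t_{-1}=0$, $t_0=1$, $t_k=a_kt_{k-1}+t_{k-2}$ for $k\ge1$; note $\gcd(s_k,t_k)=1$. For an odd natural number $n$ and an integer $m$ coprime to $n$, $\left(\frac{m}{n}\right)$ is the usual Jacobi symbol (equal to $1$ when $n=1$). If $n$ is even (including $n=0$) and $\gcd(m,n)=1$, one sets $\left(\frac{m}{n}\right)=*$, where $*$ is a fixed symbol different from $\pm1$. *)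

theory Defs
  imports Complex_Main "HOL-Number_Theory.Number_Theory"
begin

fun cf_rem :: "real \<Rightarrow> nat \<Rightarrow> real" where
  "cf_rem x 0 = x"
| "cf_rem x (Suc n) = 1 / frac (cf_rem x n)"

definition cf :: "real \<Rightarrow> nat \<Rightarrow> int" where
  "cf x n = \<lfloor>cf_rem x n\<rfloor>"

text \<open>Numerators s_k and denominators t_k of the convergents (k \<ge> 0),
  from s_{-1} = 1, s_0 = a_0, t_{-1} = 0, t_0 = 1.\<close>
fun conv_num :: "(nat \<Rightarrow> int) \<Rightarrow> nat \<Rightarrow> int" where
  "conv_num a 0 = a 0"
| "conv_num a (Suc 0) = a 1 * a 0 + 1"
| "conv_num a (Suc (Suc n)) = a (Suc (Suc n)) * conv_num a (Suc n) + conv_num a n"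

fun conv_den :: "(nat \<Rightarrow> int) \<Rightarrow> nat \<Rightarrow> int" where
  "conv_den a 0 = 1"
| "conv_den a (Suc 0) = a 1"
| "conv_den a (Suc (Suc n)) = a (Suc (Suc n)) * conv_den a (Suc n) + conv_den a n"

text \<open>Jacobi symbol (m/n) for natural n (given as a nonnegative integer);
  None represents the symbol * used when n is even (including n = 0).\<close>
definition jacobi :: "int \<Rightarrow> int \<Rightarrow> int option" where
  "jacobi m n = (if even n then None
     else Some (\<Prod>p\<in>prime_factors n. Legendre m p ^ multiplicity p n))"

end

theory Submission
  imports Defs
begin

text \<open>Let \<open>t\<^sub>j\<close> and \<open>s\<^sub>j\<close> be the sequences obeying the convergent recurrence, started at
  index \<open>-1\<close>. Along the recurrence \<open>C = kB + A\<close>, the residues mod 4 of two consecutive terms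
  together with the two Jacobi symbols between them depend only on the partial quotients
  mod 4: \<open>(C/B) = (A/B)\<close>; for odd \<open>B\<close> reciprocity recovers \<open>(B/C)\<close> from \<open>(C/B)\<close>; for even \<open>B\<close>
  each increment of \<open>k\<close> multiplies \<open>(B/(kB + A))\<close> by a sign depending only on residues
  mod 4, and these signs are 4-periodic in \<open>k\<close> with product 1 over a period. Finally
  \<open>s\<^sub>k t\<^sub>k\<^sub>-\<^sub>1 - s\<^sub>k\<^sub>-\<^sub>1 t\<^sub>k = \<plusminus>1\<close> gives \<open>(s\<^sub>k/t\<^sub>k) = (-1/t\<^sub>k)\<^sup>k\<^sup>+\<^sup>1 (t\<^sub>k\<^sub>-\<^sub>1/t\<^sub>k)\<close>,
  and symmetrically for \<open>(t\<^sub>k/s\<^sub>k)\<close>.\<close>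

lemma eq_if_cong_signs:
  fixes x y p :: int
  assumes "x \<in> {-1, 0, 1}" "y \<in> {-1, 0, 1}" "2 < p" "[x = y] (mod p)"
  shows "x = y"
proof (rule ccontr)
  assume "x \<noteq> y"
  moreover have "p dvd (x - y)" using assms(4) by (simp add: cong_iff_dvd_diff)
  ultimately have "\<bar>p\<bar> \<le> \<bar>x - y\<bar>" using dvd_imp_le_int by simp
  moreover have "\<bar>x - y\<bar> \<le> 2" using assms(1,2) by auto
  ultimately show False using assms(3) by simp
qed

lemma euler_criterion_int:
  fixes p a :: int
  assumes "prime p" "2 < p"
  shows "[Legendre a p = a ^ nat ((p - 1) div 2)] (mod p)"
proof -
  have "[Legendre a (int (nat p)) = a ^ ((nat p - 1) div 2)] (mod int (nat p))"
    using assms by (intro euler_criterion) auto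
  moreover have "(nat p - 1) div 2 = nat ((p - 1) div 2)"
    using assms by (simp add: nat_div_distrib nat_diff_distrib)
  ultimately show ?thesis using assms by simp
qed

lemma Legendre_cong:
  assumes "[m = m'] (mod p)"
  shows "Legendre m p = Legendre m' p"
proof -
  have "[m = 0] (mod p) \<longleftrightarrow> [m' = 0] (mod p)" "QuadRes p m \<longleftrightarrow> QuadRes p m'"
    unfolding QuadRes_def using assms cong_sym cong_trans by blast+
  then show ?thesis unfolding Legendre_def by simp
qed

lemma Legendre_in_signs: "Legendre m p \<in> {-1, 0, 1}"
  unfolding Legendre_def by auto

lemma Legendre_mult:
  assumes "prime p" "2 < p"
  shows "Legendre (m * m') p = Legendre m p * Legendre m' p"
proof (rule eq_if_cong_signs)
  let ?e = "nat ((p - 1) div 2)"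
  have "[Legendre m p * Legendre m' p = m ^ ?e * m' ^ ?e] (mod p)"
    using euler_criterion_int[OF assms] by (blast intro: cong_mult)
  then show "[Legendre (m * m') p = Legendre m p * Legendre m' p] (mod p)"
    using euler_criterion_int[OF assms, of "m * m'"]
    by (metis cong_sym cong_trans power_mult_distrib)
  show "Legendre m p * Legendre m' p \<in> {-1, 0, 1}"
    using Legendre_in_signs[of m p] Legendre_in_signs[of m' p] by auto
qed (use assms Legendre_in_signs in auto)

lemma Legendre_one:
  assumes "1 < p"
  shows "Legendre 1 p = 1"
proof -
  have "\<not> [1 = 0] (mod p)" using assms by (simp add: cong_0_iff)
  moreover have "QuadRes p 1" unfolding QuadRes_def by (rule exI[of _ 1]) simp
  ultimately show ?thesis unfolding Legendre_def by simp
qed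

lemma Legendre_square_eq_1: "prime p \<Longrightarrow> \<not> p dvd m \<Longrightarrow> Legendre m p ^ 2 = 1"
  unfolding Legendre_def by (auto simp: cong_0_iff)

text \<open>For odd \<open>m\<close>, \<open>n\<close> these are \<open>(-1)^((n-1)/2)\<close> and \<open>(-1)^((m-1)/2 \<cdot> (n-1)/2)\<close>.\<close>

definition chi4 :: "int \<Rightarrow> int" where
  "chi4 n = (if n mod 4 = 1 then 1 else -1)"

definition qr_sign :: "int \<Rightarrow> int \<Rightarrow> int" where
  "qr_sign m n = (if m mod 4 = 3 \<and> n mod 4 = 3 then -1 else 1)"

lemma odd_mod_4_cases: "odd (n :: int) \<Longrightarrow> n mod 4 = 1 \<or> n mod 4 = 3"
  by presburger

lemma chi4_cong: "[n = n'] (mod 4) \<Longrightarrow> chi4 n = chi4 n'"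
  unfolding chi4_def cong_def by simp

lemma qr_sign_cong: "[m = m'] (mod 4) \<Longrightarrow> [n = n'] (mod 4) \<Longrightarrow> qr_sign m n = qr_sign m' n'"
  unfolding qr_sign_def cong_def by simp

lemma qr_sign_commute: "qr_sign m n = qr_sign n m"
  unfolding qr_sign_def by auto

lemma chi4_mult: "odd m \<Longrightarrow> odd n \<Longrightarrow> chi4 (m * n) = chi4 m * chi4 n"
proof -
  assume "odd m" "odd n"
  then have "m mod 4 = 1 \<or> m mod 4 = 3" "n mod 4 = 1 \<or> n mod 4 = 3" by presburger+
  moreover have "(m * n) mod 4 = ((m mod 4) * (n mod 4)) mod 4" by (simp add: mod_mult_eq)
  ultimately show ?thesis unfolding chi4_def by auto
qed

lemma qr_sign_mult_right: "odd n \<Longrightarrow> odd n' \<Longrightarrow> qr_sign m (n * n') = qr_sign m n * qr_sign m n'"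
proof -
  assume "odd n" "odd n'"
  then have "n mod 4 = 1 \<or> n mod 4 = 3" "n' mod 4 = 1 \<or> n' mod 4 = 3" by presburger+
  moreover have "(n * n') mod 4 = ((n mod 4) * (n' mod 4)) mod 4" by (simp add: mod_mult_eq)
  ultimately show ?thesis unfolding qr_sign_def by auto
qed

lemma minus_one_power_half:
  fixes p :: int
  assumes "0 < p" "odd p"
  shows "(-1::int) ^ nat ((p - 1) div 2) = chi4 p"
proof -
  have "(p - 1) div 2 = 2 * (p div 4) + (if p mod 4 = 1 then 0 else 1)"
    using assms by presburger
  moreover have "0 \<le> p div 4" using assms by simp
  ultimately have "nat ((p - 1) div 2) = 2 * nat (p div 4) + (if p mod 4 = 1 then 0 else 1)"
    by (simp add: nat_add_distrib nat_mult_distrib)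
  then show ?thesis unfolding chi4_def by (simp add: power_add power_mult)
qed

lemma Legendre_minus_one:
  assumes "prime p" "2 < p"
  shows "Legendre (-1) p = chi4 p"
proof (rule eq_if_cong_signs)
  have "odd p" using assms prime_odd_int by auto
  then show "[Legendre (-1) p = chi4 p] (mod p)"
    using euler_criterion_int[OF assms, of "-1"] minus_one_power_half assms by simp
qed (use assms Legendre_in_signs chi4_def in auto)

lemma Legendre_reciprocity:
  assumes "prime p" "2 < p" "prime q" "2 < q" "p \<noteq> q"
  shows "Legendre p q * Legendre q p = qr_sign p q"
proof -
  have "odd p" "odd q" using assms prime_odd_int by auto
  have "Legendre p q * Legendre q p
      = ((-1::int) ^ nat ((p - 1) div 2)) ^ nat ((q - 1) div 2)"
    using Quadratic_Reciprocity_int[of p q] assms by (simp add: nat_mult_distrib power_mult)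
  also have "\<dots> = chi4 p ^ nat ((q - 1) div 2)"
    using minus_one_power_half \<open>odd p\<close> assms by simp
  also have "\<dots> = qr_sign p q"
    using minus_one_power_half[of q] \<open>odd q\<close> assms odd_mod_4_cases[OF \<open>odd p\<close>] odd_mod_4_cases[OF \<open>odd q\<close>]
    unfolding chi4_def qr_sign_def by auto
  finally show ?thesis .
qed

definition jacobi_sym :: "int \<Rightarrow> int \<Rightarrow> int" where
  "jacobi_sym m n = (\<Prod>p\<in>prime_factors n. Legendre m p ^ multiplicity p n)"

lemma jacobi_eq_jacobi_sym: "jacobi m n = (if even n then None else Some (jacobi_sym m n))"
  unfolding jacobi_def jacobi_sym_def by simp

lemma jacobi_sym_one_right [simp]: "jacobi_sym m 1 = 1"
  unfolding jacobi_sym_def by simp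

lemma jacobi_sym_one_left [simp]: "jacobi_sym 1 n = 1"
  unfolding jacobi_sym_def
  by (rule prod.neutral) (auto simp: in_prime_factors_iff Legendre_one prime_gt_1_int)

lemma jacobi_sym_prime:
  assumes "prime p"
  shows "jacobi_sym m p = Legendre m p"
proof -
  have "p \<noteq> 0" "\<not> is_unit p" using prime_ge_2_int[OF assms] by auto
  then show ?thesis
    unfolding jacobi_sym_def using assms by (simp add: prime_factorization_prime multiplicity_self)
qed

lemma jacobi_sym_cong:
  assumes "[m = m'] (mod n)"
  shows "jacobi_sym m n = jacobi_sym m' n"
  unfolding jacobi_sym_def
proof (rule prod.cong)
  fix p assume "p \<in> prime_factors n"
  then have "[m = m'] (mod p)"
    using assms cong_dvd_modulus by (auto simp: in_prime_factors_iff)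
  then show "Legendre m p ^ multiplicity p n = Legendre m' p ^ multiplicity p n"
    using Legendre_cong by simp
qed simp

lemma jacobi_sym_eq_prod_superset:
  assumes "finite S" "\<forall>p\<in>S. prime p" "prime_factors n \<subseteq> S" "n \<noteq> 0"
  shows "jacobi_sym m n = (\<Prod>p\<in>S. Legendre m p ^ multiplicity p n)"
  unfolding jacobi_sym_def
  by (rule prod.mono_neutral_left[OF assms(1,3)])
    (use assms in \<open>auto simp: in_prime_factors_iff not_dvd_imp_multiplicity_0\<close>)

lemma jacobi_sym_mult_right:
  assumes "n \<noteq> 0" "n' \<noteq> 0"
  shows "jacobi_sym m (n * n') = jacobi_sym m n * jacobi_sym m n'"
proof -
  let ?S = "prime_factors n \<union> prime_factors n'"
  have S: "finite ?S" "\<forall>p\<in>?S. prime p" by (auto simp: in_prime_factors_iff)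
  have "jacobi_sym m (n * n') = (\<Prod>p\<in>?S. Legendre m p ^ multiplicity p (n * n'))"
    using jacobi_sym_eq_prod_superset[OF S] assms prime_factors_product[OF assms] by simp
  also have "\<dots> = (\<Prod>p\<in>?S. Legendre m p ^ multiplicity p n * Legendre m p ^ multiplicity p n')"
  proof (rule prod.cong)
    fix p assume "p \<in> ?S"
    then have "multiplicity p (n * n') = multiplicity p n + multiplicity p n'"
      using S(2) assms prime_elem_multiplicity_mult_distrib by blast
    then show "Legendre m p ^ multiplicity p (n * n')
        = Legendre m p ^ multiplicity p n * Legendre m p ^ multiplicity p n'"
      by (simp add: power_add)
  qed simp
  also have "\<dots> = jacobi_sym m n * jacobi_sym m n'"
    using jacobi_sym_eq_prod_superset[OF S] assms by (simp add: prod.distrib)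
  finally show ?thesis .
qed

lemma prime_factor_of_odd_gt_2: "prime (p::int) \<Longrightarrow> p dvd n \<Longrightarrow> odd n \<Longrightarrow> 2 < p"
  using prime_ge_2_int[of p] by (cases "p = 2") auto

lemma jacobi_sym_mult_left:
  assumes "odd n"
  shows "jacobi_sym (m * m') n = jacobi_sym m n * jacobi_sym m' n"
proof -
  have "Legendre (m * m') p = Legendre m p * Legendre m' p" if "p \<in> prime_factors n" for p
    using that assms prime_factor_of_odd_gt_2 Legendre_mult by (auto simp: in_prime_factors_iff)
  then show ?thesis
    unfolding jacobi_sym_def by (simp add: power_mult_distrib prod.distrib)
qed

lemma jacobi_sym_power_left: "odd n \<Longrightarrow> jacobi_sym (m ^ j) n = jacobi_sym m n ^ j"
  by (induction j) (simp_all add: jacobi_sym_mult_left)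

lemma jacobi_sym_square:
  assumes "coprime m n"
  shows "jacobi_sym m n ^ 2 = 1"
proof -
  have "Legendre m p ^ 2 = 1" if "p \<in> prime_factors n" for p
  proof -
    have "prime p" "p dvd n" using that by (auto simp: in_prime_factors_iff)
    then have "\<not> p dvd m"
      using assms prime_ge_2_int[of p] coprime_common_divisor[of m n p] by auto
    then show ?thesis using Legendre_square_eq_1 \<open>prime p\<close> by blast
  qed
  moreover have "jacobi_sym m n ^ 2 = (\<Prod>p\<in>prime_factors n. (Legendre m p ^ 2) ^ multiplicity p n)"
    unfolding jacobi_sym_def by (simp add: prod_power_distrib flip: power_mult) (simp add: mult.commute)
  ultimately show ?thesis by simp
qed

lemma odd_pos_int_induct [consumes 2, case_names one prime_mult]:
  fixes n :: int
  assumes "0 < n" "odd n" "P 1"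
    and prime_mult: "\<And>p k. prime p \<Longrightarrow> 2 < p \<Longrightarrow> 0 < k \<Longrightarrow> odd k \<Longrightarrow> P k \<Longrightarrow> P (p * k)"
  shows "P n"
  using assms(1,2)
proof (induction "nat n" arbitrary: n rule: less_induct)
  case less
  show ?case
  proof (cases "n = 1")
    case True then show ?thesis using assms(3) by simp
  next
    case False
    then have "\<bar>n\<bar> \<noteq> 1" using less.prems by simp
    then obtain p where p: "prime p" "p dvd n" using prime_factor_int by blast
    then obtain k where k: "n = p * k" by blast
    have "2 < p" using prime_factor_of_odd_gt_2 p less.prems by blast
    then have "0 < k" "odd k" using less.prems k by (auto simp: zero_less_mult_iff)
    moreover have "k < n"
      using k \<open>2 < p\<close> \<open>0 < k\<close> by (simp add: mult_less_cancel_right1 less_le_trans)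
    ultimately have "P k" using less.hyps by simp
    then show ?thesis using prime_mult p \<open>2 < p\<close> \<open>0 < k\<close> \<open>odd k\<close> k by blast
  qed
qed

lemma jacobi_sym_minus_one:
  assumes "0 < n" "odd n"
  shows "jacobi_sym (-1) n = chi4 n"
  using assms
proof (induction n rule: odd_pos_int_induct)
  case one then show ?case by (simp add: chi4_def)
next
  case (prime_mult p k)
  then show ?case
    using jacobi_sym_mult_right[of p k] jacobi_sym_prime Legendre_minus_one chi4_mult prime_odd_int
    by simp
qed

lemma jacobi_sym_reciprocity_prime:
  assumes "prime p" "2 < p" "0 < n" "odd n" "coprime p n"
  shows "jacobi_sym p n * jacobi_sym n p = qr_sign p n"
  using assms(3-5)
proof (induction n rule: odd_pos_int_induct)
  case one then show ?case by (simp add: qr_sign_def)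
next
  case (prime_mult q k)
  then have "p \<noteq> q" using assms(1) by auto
  have "odd p" using assms prime_odd_int by simp
  have "jacobi_sym p (q * k) * jacobi_sym (q * k) p
      = (jacobi_sym p q * jacobi_sym q p) * (jacobi_sym p k * jacobi_sym k p)"
    using jacobi_sym_mult_right[of q k p] jacobi_sym_mult_left[OF \<open>odd p\<close>, of q k] prime_mult.hyps
    by (simp add: algebra_simps)
  also have "\<dots> = qr_sign p q * qr_sign p k"
    using prime_mult Legendre_reciprocity[of p q] assms \<open>p \<noteq> q\<close> jacobi_sym_prime by simp
  also have "\<dots> = qr_sign p (q * k)"
    using qr_sign_mult_right prime_mult.hyps prime_odd_int by simp
  finally show ?case .
qed

lemma jacobi_sym_reciprocity:
  assumes "0 < m" "odd m" "0 < n" "odd n" "coprime m n"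
  shows "jacobi_sym m n * jacobi_sym n m = qr_sign m n"
  using assms(1,2,5)
proof (induction m rule: odd_pos_int_induct)
  case one then show ?case by (simp add: qr_sign_def)
next
  case (prime_mult p k)
  have "jacobi_sym (p * k) n * jacobi_sym n (p * k)
      = (jacobi_sym p n * jacobi_sym n p) * (jacobi_sym k n * jacobi_sym n k)"
    using jacobi_sym_mult_right[of p k n] jacobi_sym_mult_left[OF assms(4), of p k] prime_mult.hyps
    by (simp add: algebra_simps)
  also have "\<dots> = qr_sign p n * qr_sign k n"
    using prime_mult jacobi_sym_reciprocity_prime assms by simp
  also have "\<dots> = qr_sign (p * k) n"
    using qr_sign_mult_right[of p k n] qr_sign_commute prime_mult.hyps prime_odd_int by metis
  finally show ?case .
qed

lemma jacobi_sym_swap: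
  assumes "0 < m" "odd m" "0 < n" "odd n" "coprime m n"
  shows "jacobi_sym m n = qr_sign m n * jacobi_sym n m"
proof -
  have "jacobi_sym n m ^ 2 = 1" using jacobi_sym_square assms(5) by (simp add: coprime_commute)
  then have "jacobi_sym m n = jacobi_sym m n * jacobi_sym n m * jacobi_sym n m"
    by (simp add: power2_eq_square)
  also have "\<dots> = qr_sign m n * jacobi_sym n m" using jacobi_sym_reciprocity assms by simp
  finally show ?thesis .
qed

lemma coprime_mult_add_right_iff: "coprime (a::int) (k * a + b) \<longleftrightarrow> coprime a b"
  by (simp add: coprime_iff_gcd_eq_1 gcd_add_mult)

lemma even_iff_even_if_cong_mod_4: "[m = n] (mod 4) \<Longrightarrow> even (m::int) \<longleftrightarrow> even n"
  unfolding cong_def by presburger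

definition shift_sign :: "int \<Rightarrow> int \<Rightarrow> int" where
  "shift_sign u w = chi4 (w + u) * qr_sign w (w + u)"

lemma shift_sign_cong:
  "[u = u'] (mod 4) \<Longrightarrow> [w = w'] (mod 4) \<Longrightarrow> shift_sign u w = shift_sign u' w'"
  unfolding shift_sign_def using chi4_cong qr_sign_cong cong_add by metis

lemma shift_sign_add_double: "even u \<Longrightarrow> shift_sign u (w + 2 * u) = shift_sign u w"
  by (intro shift_sign_cong cong_refl) (unfold cong_def, presburger)

lemma shift_sign_self_mult: "shift_sign u w * shift_sign u w = 1"
  unfolding shift_sign_def chi4_def qr_sign_def by simp

text \<open>Since \<open>u \<equiv> -w (mod w + u)\<close>, \<open>(u/(w+u)) = (-1/(w+u)) (w/(w+u))\<close>, and reciprocity brings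
  this back to \<open>((w+u)/w) = (u/w)\<close>; no supplementary law for \<open>(2/n)\<close> is needed.\<close>

lemma jacobi_sym_shift:
  assumes "0 \<le> u" "even u" "0 < w" "odd w" "coprime u w"
  shows "jacobi_sym u (w + u) = shift_sign u w * jacobi_sym u w"
proof -
  have "coprime w (w + u)" using assms(5) by (simp add: coprime_iff_gcd_eq_1 gcd.commute)
  have "[u = -1 * w] (mod (w + u))" by (simp add: cong_iff_dvd_diff add.commute)
  then have "jacobi_sym u (w + u) = jacobi_sym (-1 * w) (w + u)" by (rule jacobi_sym_cong)
  also have "\<dots> = jacobi_sym (-1) (w + u) * jacobi_sym w (w + u)"
    using jacobi_sym_mult_left[of "w + u" "-1" w] assms by simp
  also have "\<dots> = chi4 (w + u) * (qr_sign w (w + u) * jacobi_sym (w + u) w)"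
    using jacobi_sym_minus_one jacobi_sym_swap[of w "w + u"] assms \<open>coprime w (w + u)\<close> by simp
  also have "jacobi_sym (w + u) w = jacobi_sym u w"
    by (rule jacobi_sym_cong) (simp add: cong_iff_dvd_diff)
  finally show ?thesis unfolding shift_sign_def by simp
qed

lemma jacobi_sym_linear:
  assumes "0 \<le> u" "even u" "0 < v" "odd v" "coprime u v"
  shows "jacobi_sym u (int k * u + v) = (\<Prod>j<k. shift_sign u (int j * u + v)) * jacobi_sym u v"
proof (induction k)
  case (Suc k)
  let ?w = "int k * u + v"
  have "0 < ?w" "odd ?w" "coprime u ?w"
    using assms by (simp_all add: add_nonneg_pos coprime_mult_add_right_iff)
  have "jacobi_sym u (int (Suc k) * u + v) = jacobi_sym u (?w + u)"
    by (simp add: algebra_simps)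
  also have "\<dots> = shift_sign u ?w * jacobi_sym u ?w"
    using jacobi_sym_shift assms \<open>0 < ?w\<close> \<open>odd ?w\<close> \<open>coprime u ?w\<close> by blast
  finally show ?case using Suc by (simp add: mult_ac)
qed simp

lemma prod_lessThan_mod_4:
  fixes g :: "nat \<Rightarrow> 'a::comm_monoid_mult"
  assumes "\<And>j. g (j + 2) = g j" "\<And>j. g j * g j = 1"
  shows "(\<Prod>j<k. g j) = (\<Prod>j<k mod 4. g j)"
proof -
  have g2: "g (Suc (Suc j)) = g j" for j using assms(1)[of j] by simp
  have "(\<Prod>j<4 * q + r. g j) = (\<Prod>j<r. g j)" for q r
  proof (induction q)
    case (Suc q)
    let ?n = "4 * q + r"
    have "4 * Suc q + r = Suc (Suc (Suc (Suc ?n)))" by simp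
    then have "(\<Prod>j<4 * Suc q + r. g j)
        = (\<Prod>j<?n. g j) * (g ?n * g ?n) * (g (Suc ?n) * g (Suc ?n))"
      by (simp only: prod.lessThan_Suc) (simp add: g2 mult_ac)
    then show ?case using Suc assms(2) by simp
  qed simp
  from this[of "k div 4" "k mod 4"] show ?thesis by simp
qed

lemma jacobi_sym_linear_cong:
  assumes "0 \<le> u" "even u" "0 < v" "odd v" "coprime u v"
    and "0 \<le> u'" "0 < v'" "coprime u' v'"
    and "[u = u'] (mod 4)" "[v = v'] (mod 4)"
    and "0 \<le> k" "0 \<le> k'" "[k = k'] (mod 4)"
    and "jacobi_sym u v = jacobi_sym u' v'"
  shows "jacobi_sym u (k * u + v) = jacobi_sym u' (k' * u' + v')"
proof -
  have "even u'" "odd v'" using assms even_iff_even_if_cong_mod_4 by blast+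
  let ?g = "\<lambda>u v j. shift_sign u (int j * u + v)"
  have periodic: "(\<Prod>j<n. ?g u v j) = (\<Prod>j<n mod 4. ?g u v j)" if "even u" for u v n
  proof (rule prod_lessThan_mod_4)
    fix j
    show "?g u v (j + 2) = ?g u v j"
      using shift_sign_add_double[OF that, of "int j * u + v"] by (simp add: algebra_simps)
  qed (rule shift_sign_self_mult)
  have "nat k mod 4 = nat k' mod 4"
    using assms(11-13) nat_mod_distrib[of k 4] nat_mod_distrib[of k' 4] by (simp add: cong_def)
  moreover have "?g u v j = ?g u' v' j" for j
  proof -
    have "[int j * u + v = int j * u' + v'] (mod 4)"
      using assms(9,10) by (intro cong_add cong_mult cong_refl) auto
    then show ?thesis using shift_sign_cong assms(9) by blast
  qed
  ultimately have "(\<Prod>j<nat k. ?g u v j) = (\<Prod>j<nat k'. ?g u' v' j)"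
    using periodic[OF \<open>even u\<close>, of v "nat k"] periodic[OF \<open>even u'\<close>, of v' "nat k'"] by simp
  then show ?thesis
    using jacobi_sym_linear[OF assms(1-5), of "nat k"]
      jacobi_sym_linear[OF assms(6) \<open>even u'\<close> assms(7) \<open>odd v'\<close> assms(8), of "nat k'"]
      assms(11,12,14) by simp
qed

lemma jacobi_sym_swap_linear:
  assumes "0 < B" "odd B" "0 < k * B + A" "odd (k * B + A)" "coprime A B"
  shows "jacobi_sym B (k * B + A) = qr_sign B (k * B + A) * jacobi_sym A B"
proof -
  have "coprime B (k * B + A)"
    using assms(5) coprime_commute coprime_mult_add_right_iff by metis
  then have "jacobi_sym B (k * B + A) = qr_sign B (k * B + A) * jacobi_sym (k * B + A) B"
    using jacobi_sym_swap assms by blast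
  also have "jacobi_sym (k * B + A) B = jacobi_sym A B"
    by (rule jacobi_sym_cong) (simp add: cong_iff_dvd_diff)
  finally show ?thesis .
qed

lemma jacobi_cong: "[m = m'] (mod n) \<Longrightarrow> jacobi m n = jacobi m' n"
  by (simp add: jacobi_eq_jacobi_sym jacobi_sym_cong)

lemma jacobi_eqI:
  assumes "[n = n'] (mod 4)"
    and "odd n \<Longrightarrow> odd n' \<Longrightarrow> jacobi_sym m n = jacobi_sym m' n'"
  shows "jacobi m n = jacobi m' n'"
  using assms even_iff_even_if_cong_mod_4[OF assms(1)] by (simp add: jacobi_eq_jacobi_sym)

definition jacobi_equiv :: "int \<Rightarrow> int \<Rightarrow> int \<Rightarrow> int \<Rightarrow> bool" where
  "jacobi_equiv a b a' b' \<longleftrightarrow> [a = a'] (mod 4) \<and> [b = b'] (mod 4)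
     \<and> jacobi a b = jacobi a' b' \<and> jacobi b a = jacobi b' a'"

lemma jacobi_equiv_one_left: "[b = b'] (mod 4) \<Longrightarrow> jacobi_equiv 1 b 1 b'"
  unfolding jacobi_equiv_def using even_iff_even_if_cong_mod_4 by (simp add: jacobi_eq_jacobi_sym)

lemma jacobi_equiv_step:
  assumes nonneg: "0 \<le> A" "0 \<le> B" "0 \<le> A'" "0 \<le> B'"
    and coprime: "coprime A B" "coprime A' B'"
    and k: "0 \<le> k" "0 \<le> k'" "[k = k'] (mod 4)"
    and "jacobi_equiv A B A' B'"
  shows "jacobi_equiv B (k * B + A) B' (k' * B' + A')"
proof -
  let ?C = "k * B + A" and ?C' = "k' * B' + A'"
  have coprime': "coprime B A" "coprime B' A'" using coprime coprime_commute by blast+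
  from \<open>jacobi_equiv A B A' B'\<close> have AA': "[A = A'] (mod 4)" and BB': "[B = B'] (mod 4)"
    and JAB: "jacobi A B = jacobi A' B'" and JBA: "jacobi B A = jacobi B' A'"
    unfolding jacobi_equiv_def by auto
  have CC': "[?C = ?C'] (mod 4)" using AA' BB' k(3) by (intro cong_add cong_mult)
  have JCB: "jacobi ?C B = jacobi ?C' B'"
    using jacobi_cong[of ?C A B] jacobi_cong[of ?C' A' B'] JAB by (simp add: cong_iff_dvd_diff)
  have "jacobi B ?C = jacobi B' ?C'"
  proof (rule jacobi_eqI[OF CC'])
    assume odd: "odd ?C" "odd ?C'"
    have "0 \<le> ?C" "0 \<le> ?C'" using nonneg k by simp_all
    then have pos: "0 < ?C" "0 < ?C'" using odd by (metis dvd_0_right le_less)+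
    show "jacobi_sym B ?C = jacobi_sym B' ?C'"
    proof (cases "even B")
      case False
      then have "odd B'" "0 < B" "0 < B'"
        using BB' nonneg even_iff_even_if_cong_mod_4 by (auto simp: order_le_less)
      have "jacobi_sym A B = jacobi_sym A' B'"
        using JAB False \<open>odd B'\<close> by (simp add: jacobi_eq_jacobi_sym)
      moreover have "qr_sign B ?C = qr_sign B' ?C'" using qr_sign_cong BB' CC' by blast
      ultimately show ?thesis
        using jacobi_sym_swap_linear[of B k A] jacobi_sym_swap_linear[of B' k' A']
          pos odd \<open>odd B\<close> \<open>odd B'\<close> \<open>0 < B\<close> \<open>0 < B'\<close> coprime by simp
    next
      case True
      then have "even B'" using BB' even_iff_even_if_cong_mod_4 by blast
      have "odd A" "odd A'"
        using coprime_common_divisor[of A B 2] coprime_common_divisor[of A' B' 2]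
          coprime True \<open>even B'\<close> by auto
      then have "0 < A" "0 < A'" using nonneg by (auto simp: order_le_less)
      have "jacobi_sym B A = jacobi_sym B' A'"
        using JBA \<open>odd A\<close> \<open>odd A'\<close> by (simp add: jacobi_eq_jacobi_sym)
      then show ?thesis
        using jacobi_sym_linear_cong[of B A B' A' k k'] nonneg True \<open>odd A\<close> \<open>0 < A\<close> \<open>0 < A'\<close>
          coprime' BB' AA' k by simp
    qed
  qed
  then show ?thesis using BB' CC' JCB unfolding jacobi_equiv_def by simp
qed

fun cf_seq :: "(nat \<Rightarrow> int) \<Rightarrow> int \<Rightarrow> int \<Rightarrow> nat \<Rightarrow> int" where
  "cf_seq c a b 0 = a"
| "cf_seq c a b (Suc 0) = b"
| "cf_seq c a b (Suc (Suc n)) = c (Suc n) * cf_seq c a b (Suc n) + cf_seq c a b n"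

lemma conv_num_eq_cf_seq: "conv_num c k = cf_seq c 1 (c 0) (Suc k)"
  by (induction c k rule: conv_num.induct) simp_all

lemma conv_den_eq_cf_seq: "conv_den c k = cf_seq c 0 1 (Suc k)"
  by (induction c k rule: conv_den.induct) simp_all

lemma cf_seq_nonneg:
  assumes "\<forall>i\<ge>1. 0 \<le> c i" "0 \<le> a" "0 \<le> b"
  shows "0 \<le> cf_seq c a b n"
proof -
  have "0 \<le> cf_seq c a b n \<and> 0 \<le> cf_seq c a b (Suc n)"
    by (induction n) (use assms in auto)
  then show ?thesis ..
qed

lemma cf_seq_coprime:
  assumes "coprime a b"
  shows "coprime (cf_seq c a b n) (cf_seq c a b (Suc n))"
  by (induction n) (use assms in \<open>simp_all add: coprime_mult_add_right_iff coprime_commute\<close>)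

lemma cf_seq_det:
  "cf_seq c a b (Suc n) * cf_seq c a' b' n - cf_seq c a b n * cf_seq c a' b' (Suc n)
     = (-1) ^ n * (b * a' - a * b')"
proof (induction n)
  case (Suc n)
  then show ?case by (simp add: algebra_simps)
qed simp

lemma convergent_det_cong:
  "[cf_seq c 1 b (Suc n) * cf_seq c 0 1 n = (-1) ^ Suc n] (mod cf_seq c 0 1 (Suc n))"
  "[cf_seq c 0 1 (Suc n) * cf_seq c 1 b n = (-1) ^ n] (mod cf_seq c 1 b (Suc n))"
  using cf_seq_det[of c 1 b n 0 1] unfolding cong_iff_dvd_diff
  by (simp_all add: dvd_def algebra_simps) (metis mult.commute)+

lemma cf_seq_jacobi_equiv:
  assumes "\<forall>i\<ge>1. 0 \<le> c i" "\<forall>i\<ge>1. 0 \<le> c' i"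
    and "0 \<le> a" "0 \<le> b" "0 \<le> a'" "0 \<le> b'" "coprime a b" "coprime a' b'"
    and "jacobi_equiv a b a' b'"
  shows "\<forall>i\<in>{1..n}. [c i = c' i] (mod 4) \<Longrightarrow>
    jacobi_equiv (cf_seq c a b n) (cf_seq c a b (Suc n)) (cf_seq c' a' b' n) (cf_seq c' a' b' (Suc n))"
proof (induction n)
  case (Suc n)
  then have "jacobi_equiv (cf_seq c a b n) (cf_seq c a b (Suc n)) (cf_seq c' a' b' n) (cf_seq c' a' b' (Suc n))"
    by auto
  moreover have "\<forall>m. 0 \<le> cf_seq c a b m" "\<forall>m. 0 \<le> cf_seq c' a' b' m"
    using assms cf_seq_nonneg by blast+
  moreover have "[c (Suc n) = c' (Suc n)] (mod 4)" using Suc.prems by simp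
  ultimately show ?case
    using assms(1,2,7,8) cf_seq_coprime[of a b c n] cf_seq_coprime[of a' b' c' n]
    by (simp only: cf_seq.simps(3)) (rule jacobi_equiv_step; simp)
qed (use assms in simp)

lemma jacobi_sym_unimodular:
  assumes "[S * t = (-1) ^ j] (mod T)" "0 < T" "odd T" "coprime t T"
  shows "jacobi_sym S T = chi4 T ^ j * jacobi_sym t T"
proof -
  have "jacobi_sym S T * jacobi_sym t T = chi4 T ^ j"
    using jacobi_sym_cong[OF assms(1)] assms(2,3)
    by (simp add: jacobi_sym_mult_left jacobi_sym_power_left jacobi_sym_minus_one)
  moreover have "jacobi_sym t T * jacobi_sym t T = 1"
    using jacobi_sym_square[OF assms(4)] by (simp add: power2_eq_square)
  ultimately show ?thesis by (metis mult.assoc mult.commute mult_1_right)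
qed

lemma jacobi_eq_if_unimodular:
  assumes "[T = T'] (mod 4)" "jacobi t T = jacobi t' T'"
    and "0 \<le> T" "0 \<le> T'" "coprime t T" "coprime t' T'"
    and "[S * t = (-1) ^ j] (mod T)" "[S' * t' = (-1) ^ j] (mod T')"
  shows "jacobi S T = jacobi S' T'"
proof (rule jacobi_eqI[OF assms(1)])
  assume "odd T" "odd T'"
  then have "0 < T" "0 < T'" using assms(3,4) by (auto simp: order_le_less)
  then show "jacobi_sym S T = jacobi_sym S' T'"
    using jacobi_sym_unimodular[OF assms(7)] jacobi_sym_unimodular[OF assms(8)] assms(2,5,6)
      chi4_cong[OF assms(1)] \<open>odd T\<close> \<open>odd T'\<close> by (simp add: jacobi_eq_jacobi_sym)
qed

lemma jacobi_conv_num_conv_den_cong: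
  assumes "\<forall>i\<ge>1. 0 \<le> c i" "\<forall>i\<ge>1. 0 \<le> c' i" "\<forall>i\<in>{1..k}. [c i = c' i] (mod 4)"
  shows "jacobi (conv_num c k) (conv_den c k) = jacobi (conv_num c' k) (conv_den c' k)"
proof -
  have equiv: "jacobi_equiv (cf_seq c 0 1 k) (cf_seq c 0 1 (Suc k)) (cf_seq c' 0 1 k) (cf_seq c' 0 1 (Suc k))"
    using cf_seq_jacobi_equiv[OF assms(1,2)] assms(3) by (simp add: jacobi_equiv_def)
  show ?thesis
    unfolding conv_num_eq_cf_seq conv_den_eq_cf_seq
    by (rule jacobi_eq_if_unimodular[OF _ _ _ _ cf_seq_coprime cf_seq_coprime
          convergent_det_cong(1) convergent_det_cong(1)])
      (use equiv assms(1,2) in \<open>simp_all add: jacobi_equiv_def cf_seq_nonneg\<close>)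
qed

lemma jacobi_conv_den_conv_num_cong:
  assumes "\<forall>i\<ge>1. 0 \<le> c i" "\<forall>i\<ge>1. 0 \<le> c' i" "\<forall>i\<in>{1..k}. [c i = c' i] (mod 4)"
    and "0 \<le> c 0" "0 \<le> c' 0" "[c 0 = c' 0] (mod 4)"
  shows "jacobi (conv_den c k) (conv_num c k) = jacobi (conv_den c' k) (conv_num c' k)"
proof -
  have equiv: "jacobi_equiv (cf_seq c 1 (c 0) k) (cf_seq c 1 (c 0) (Suc k))
      (cf_seq c' 1 (c' 0) k) (cf_seq c' 1 (c' 0) (Suc k))"
    using cf_seq_jacobi_equiv[OF assms(1,2)] assms(3-6) jacobi_equiv_one_left by simp
  show ?thesis
    unfolding conv_num_eq_cf_seq conv_den_eq_cf_seq
    by (rule jacobi_eq_if_unimodular[OF _ _ _ _ cf_seq_coprime cf_seq_coprime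
          convergent_det_cong(2) convergent_det_cong(2)])
      (use equiv assms in \<open>simp_all add: jacobi_equiv_def cf_seq_nonneg\<close>)
qed

lemma cf_rem_not_rat: "x \<notin> \<rat> \<Longrightarrow> cf_rem x n \<notin> \<rat>"
proof (induction n)
  case (Suc n)
  let ?r = "cf_rem x n"
  show ?case
  proof
    assume "cf_rem x (Suc n) \<in> \<rat>"
    then have "frac ?r \<in> \<rat>" using Rats_divide[OF Rats_1, of "1 / frac ?r"] by simp
    then have "?r \<in> \<rat>" unfolding frac_def by (metis Rats_add Rats_of_int diff_add_cancel)
    with Suc show False by simp
  qed
qed simp

lemma cf_ge_1:
  assumes "x \<notin> \<rat>" "1 \<le> i"
  shows "1 \<le> cf x i"
proof -
  obtain n where n: "i = Suc n" using assms(2) by (cases i) auto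
  have "cf_rem x n \<notin> \<int>" using cf_rem_not_rat[OF assms(1)] Ints_subset_Rats by blast
  then have "0 < frac (cf_rem x n)" by (simp add: order_le_less)
  then have "1 \<le> 1 / frac (cf_rem x n)" using frac_lt_1[of "cf_rem x n"] by (simp add: le_divide_eq)
  then show ?thesis unfolding cf_def n by simp
qed

theorem theorem2:
  fixes x y :: real and k :: nat
  assumes "x \<notin> \<rat>" and "y \<notin> \<rat>"
    and "\<forall>i\<le>k. [cf x i = cf y i] (mod 4)"
  shows "jacobi (conv_num (cf x) k) (conv_den (cf x) k)
           = jacobi (conv_num (cf y) k) (conv_den (cf y) k)
       \<and> (cf x 0 \<ge> 0 \<and> cf y 0 \<ge> 0 \<longrightarrow>
         jacobi (conv_den (cf x) k) (conv_num (cf x) k)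
           = jacobi (conv_den (cf y) k) (conv_num (cf y) k))"
proof -
  have "\<forall>i\<ge>1. 0 \<le> cf x i" "\<forall>i\<ge>1. 0 \<le> cf y i"
    using cf_ge_1 assms(1,2) by (auto intro: order_trans[OF zero_le_one])
  moreover have "\<forall>i\<in>{1..k}. [cf x i = cf y i] (mod 4)" "[cf x 0 = cf y 0] (mod 4)"
    using assms(3) by simp_all
  ultimately show ?thesis
    using jacobi_conv_num_conv_den_cong jacobi_conv_den_conv_num_cong by blast
qed

end
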